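(* Consider the optimistic planning procedure with budget $N$. (i) If the procedure stops at a step $n<N$ because the selected node $i_n$ has depth $d$, then $v^*-v(i_n)=0$. (ii) Otherwise, if there exist $\lambda\in(1/K,1]$ and an integer $1\le d_0\le d$ such that $p_l((d-l)\Delta)\le\lambda^l$ for all $d_0\le l\le d$, then for $N>n_0:=\frac{K^{d_0+1}-1}{K-1}$ the output node $i_N$ satisfies $$v^*-v(i_N)\le\Big(d-\frac{\log(N-n_0)}{\log(\lambda K)}-\frac{\log(\lambda K-1)}{\log(\lambda K)}+1\Big)\Delta.$$
   Context: Fix $K\ge2$ arms, $\mathcal Z=\{0,\dots,z_{\max}\}$, a depth $d\ge1$, a root state $\mathbf z\in\mathcal Z^K$, and real numbers $\tilde f_j(z)$ for all arms $j$ and $z\in\mathcal Z$. The tree: a node of depth $l$ is a sequence of $l$ arms; its children append one arm. Each node $i$ carries a state $\mathbf z(i)\in\mathcal Z^K$ obtained from the root by the rule: playing arm $j$ from state $\mathbf z$ gives reward $\tilde f_j(z_j)$ and new state with $z_j\mapsto0$ and $z_{j'}\mapsto\min\{z_{\max},z_{j'}+1\}$ for $j'\ne j$. For a node $i$ of depth $l(i)$: $u(i)$ is the sum of rewards along the path from the root to $i$; $v(i)=u(i)+$ the maximum over continuations of $i$ to depth $d$ of the sum of rewards of the remaining $d-l(i)$ steps; $v^*=\max\{v(i): i\text{ of depth }d\}$. For $1\le l\le d$, $g_j(z,l)=\max\{\tilde f_j(z),\tilde f_j(\min(z+1,z_{\max})),\dots,\tilde f_j(\min(z+l,z_{\max})),\tilde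 f_j(0),\dots,\tilde f_j(\min(l,z_{\max}))\}$; $\Psi(\mathbf z,m)=m\max_jg_j(z_j,m)$ for $m\ge1$ and $\Psi(\mathbf z,0)=0$; $b(i)=u(i)+\Psi(\mathbf z(i),d-l(i))$. Procedure: set $\mathcal T_0=\emptyset$, $\mathcal S_0=\{\text{root}\}$. At step $n=0,1,\dots,N-1$ select $i_n\in\arg\max_{i\in\mathcal S_n}b(i)$; if $i_n$ has depth $d$, stop and output $i_n$; otherwise move $i_n$ from $\mathcal S_n$ to $\mathcal T_{n+1}=\mathcal T_n\cup\{i_n\}$ and add its $K$ children, giving $\mathcal S_{n+1}$. If not stopped after $N$ expansions, let $d_N$ be the maximal depth of nodes in $\mathcal T_N$ and output $i_N$, a node of depth $d_N$ in $\mathcal T_N$ with largest $b$. Let $\Delta=\max_{j,z}\tilde f_j(z)-\min\{\min_{j,z}\tilde f_j(z),0\}$. A node $i$ is $\epsilon$-optimal if $v^*-v(i)\le\epsilon$; $p_l(\epsilon)$ is the proportion of the $K^l$ nodes of depth $l$ that are $\epsilon$-optimal. *)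

theory Defs
  imports Complex_Main
begin

text \<open>Arms are the naturals 0,...,K-1. A state is a function nat => nat (only values
on arms j < K matter). A node is a list of arms (the path from the root, root = []),
its children are obtained by appending one arm at the end.\<close>

definition step :: "nat \<Rightarrow> (nat \<Rightarrow> nat) \<Rightarrow> nat \<Rightarrow> (nat \<Rightarrow> nat)" where
  "step zmax z j = (\<lambda>j'. if j' = j then 0 else min zmax (z j' + 1))"

definition state :: "nat \<Rightarrow> (nat \<Rightarrow> nat) \<Rightarrow> nat list \<Rightarrow> (nat \<Rightarrow> nat)" where
  "state zmax z0 i = foldl (step zmax) z0 i"

fun rew :: "(nat \<Rightarrow> nat \<Rightarrow> real) \<Rightarrow> nat \<Rightarrow> (nat \<Rightarrow> nat) \<Rightarrow> nat list \<Rightarrow> real" where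
  "rew f zmax z [] = 0"
| "rew f zmax z (j # js) = f j (z j) + rew f zmax (step zmax z j) js"

definition nodes :: "nat \<Rightarrow> nat \<Rightarrow> nat list set" where
  "nodes K m = {c. length c = m \<and> set c \<subseteq> {..<K}}"

definition uval :: "(nat \<Rightarrow> nat \<Rightarrow> real) \<Rightarrow> nat \<Rightarrow> (nat \<Rightarrow> nat) \<Rightarrow> nat list \<Rightarrow> real" where
  "uval f zmax z0 i = rew f zmax z0 i"

definition vval :: "nat \<Rightarrow> (nat \<Rightarrow> nat \<Rightarrow> real) \<Rightarrow> nat \<Rightarrow> (nat \<Rightarrow> nat) \<Rightarrow> nat \<Rightarrow> nat list \<Rightarrow> real" where
  "vval K f zmax z0 d i = uval f zmax z0 i
     + Max ((\<lambda>c. rew f zmax (state zmax z0 i) c) ` nodes K (d - length i))"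

definition vstar :: "nat \<Rightarrow> (nat \<Rightarrow> nat \<Rightarrow> real) \<Rightarrow> nat \<Rightarrow> (nat \<Rightarrow> nat) \<Rightarrow> nat \<Rightarrow> real" where
  "vstar K f zmax z0 d = Max (vval K f zmax z0 d ` nodes K d)"

definition gfun :: "(nat \<Rightarrow> nat \<Rightarrow> real) \<Rightarrow> nat \<Rightarrow> nat \<Rightarrow> nat \<Rightarrow> nat \<Rightarrow> real" where
  "gfun f zmax j z l = Max ((\<lambda>k. f j (min (z + k) zmax)) ` {0..l} \<union> (\<lambda>k. f j (min k zmax)) ` {0..l})"

definition Psi :: "nat \<Rightarrow> (nat \<Rightarrow> nat \<Rightarrow> real) \<Rightarrow> nat \<Rightarrow> (nat \<Rightarrow> nat) \<Rightarrow> nat \<Rightarrow> real" where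
  "Psi K f zmax zs m = (if m = 0 then 0 else real m * Max ((\<lambda>j. gfun f zmax j (zs j) m) ` {..<K}))"

definition bval :: "nat \<Rightarrow> (nat \<Rightarrow> nat \<Rightarrow> real) \<Rightarrow> nat \<Rightarrow> (nat \<Rightarrow> nat) \<Rightarrow> nat \<Rightarrow> nat list \<Rightarrow> real" where
  "bval K f zmax z0 d i = uval f zmax z0 i + Psi K f zmax (state zmax z0 i) (d - length i)"

definition children :: "nat \<Rightarrow> nat list \<Rightarrow> nat list set" where
  "children K i = (\<lambda>j. i @ [j]) ` {..<K}"

fun Sset :: "nat \<Rightarrow> (nat \<Rightarrow> nat list) \<Rightarrow> nat \<Rightarrow> nat list set" where
  "Sset K sel 0 = {[]}"
| "Sset K sel (Suc n) = (Sset K sel n - {sel n}) \<union> children K (sel n)"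

definition Tset :: "(nat \<Rightarrow> nat list) \<Rightarrow> nat \<Rightarrow> nat list set" where
  "Tset sel n = sel ` {..<n}"

definition Delta :: "nat \<Rightarrow> (nat \<Rightarrow> nat \<Rightarrow> real) \<Rightarrow> nat \<Rightarrow> real" where
  "Delta K f zmax = Max {f j z | j z. j < K \<and> z \<le> zmax}
      - min (Min {f j z | j z. j < K \<and> z \<le> zmax}) 0"

definition prop_opt :: "nat \<Rightarrow> (nat \<Rightarrow> nat \<Rightarrow> real) \<Rightarrow> nat \<Rightarrow> (nat \<Rightarrow> nat) \<Rightarrow> nat \<Rightarrow> nat \<Rightarrow> real \<Rightarrow> real" where
  "prop_opt K f zmax z0 d l eps =
     real (card {i \<in> nodes K l. vstar K f zmax z0 d - vval K f zmax z0 d i \<le> eps}) / real K ^ l"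

end

theory Submission
  imports Defs "HOL-Library.Sublist"
begin

text \<open>Since b(i) \<ge> v(i) and the open nodes S_n cut every path of depth d, the selected node
  satisfies b(i_n) \<ge> v*; together with b(i) \<le> v(i) + (d - l(i)) \<Delta> this makes every
  expanded node of depth l a (d - l) \<Delta>-optimal node, and a selected node of depth d optimal.
  The N expanded nodes are distinct, so counting them level by level (at most K^l at depth
  l \<le> d0, at most (\<lambda>K)^l deeper) gives N - n0 \<le> ((\<lambda>K)^(d_N+1) - 1) / (\<lambda>K - 1), which is
  the claimed lower bound on the depth d_N of the output node.\<close>

section \<open>Rewards and the upper bound Psi\<close>

lemma rew_append:
  "rew f zmax z (a @ b) = rew f zmax z a + rew f zmax (foldl (step zmax) z a) b"
  by (induction a arbitrary: z) auto

lemma state_snoc: "state zmax z0 (i @ [j]) = step zmax (state zmax z0 i) j"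
  by (simp add: state_def)

lemma state_le_zmax: "\<forall>j<K. z0 j \<le> zmax \<Longrightarrow> \<forall>j<K. state zmax z0 i j \<le> zmax"
  by (induction i rule: rev_induct) (simp_all add: state_snoc step_def, simp add: state_def)

lemma finite_nodes: "finite (nodes K m)"
  unfolding nodes_def using finite_lists_length_eq[of "{..<K}" m] by (simp add: conj_commute)

lemma card_nodes: "card (nodes K m) = K ^ m"
  unfolding nodes_def using card_lists_length_eq[of "{..<K}" m] by (simp add: conj_commute)

lemma replicate_in_nodes: "0 < K \<Longrightarrow> replicate m 0 \<in> nodes K m"
  by (auto simp: nodes_def)

lemma nodes_0 [simp]: "nodes K 0 = {[]}"
  by (auto simp: nodes_def)

definition rewards :: "nat \<Rightarrow> (nat \<Rightarrow> nat \<Rightarrow> real) \<Rightarrow> nat \<Rightarrow> real set" where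
  "rewards K f zmax = {f j z | j z. j < K \<and> z \<le> zmax}"

lemma finite_rewards: "finite (rewards K f zmax)"
proof -
  have "rewards K f zmax = (\<lambda>(j, z). f j z) ` ({..<K} \<times> {..zmax})"
    by (auto simp: rewards_def)
  then show ?thesis by simp
qed

lemma reward_le_Max_rewards: "j < K \<Longrightarrow> z \<le> zmax \<Longrightarrow> f j z \<le> Max (rewards K f zmax)"
  by (rule Max_ge[OF finite_rewards]) (auto simp: rewards_def)

lemma Min_rewards_le_reward: "j < K \<Longrightarrow> z \<le> zmax \<Longrightarrow> Min (rewards K f zmax) \<le> f j z"
  by (rule Min_le[OF finite_rewards]) (auto simp: rewards_def)

lemma Delta_eq: "Delta K f zmax = Max (rewards K f zmax) - min (Min (rewards K f zmax)) 0"
  by (simp add: Delta_def rewards_def)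

lemma Max_minus_Min_rewards_le_Delta:
  "Max (rewards K f zmax) - Min (rewards K f zmax) \<le> Delta K f zmax"
  unfolding Delta_eq by linarith

lemma Delta_nonneg: "0 < K \<Longrightarrow> 0 \<le> Delta K f zmax"
  using Min_rewards_le_reward[of 0 K 0 zmax f] reward_le_Max_rewards[of 0 K 0 zmax f]
    Max_minus_Min_rewards_le_Delta[of K f zmax]
  by linarith

text \<open>After k plays from z, the counter of an arm is either z_j + k (it was never played)
  or the time since its last play, which is at most k; g_j(z_j, m) ranges over both.\<close>

lemma step_counter_shape:
  assumes "z' i = min (z i + k) zmax \<or> (\<exists>k'\<le>k. z' i = min k' zmax)"
  shows "step zmax z' j i = min (z i + Suc k) zmax \<or> (\<exists>k'\<le>Suc k. step zmax z' j i = min k' zmax)"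
proof (cases "i = j")
  case True
  then show ?thesis by (auto simp: step_def intro: exI[of _ 0])
next
  case False
  from assms show ?thesis
  proof
    assume "z' i = min (z i + k) zmax"
    then show ?thesis using False by (auto simp: step_def min_def)
  next
    assume "\<exists>k'\<le>k. z' i = min k' zmax"
    then obtain k' where "k' \<le> k" "z' i = min k' zmax" by blast
    then show ?thesis using False by (auto simp: step_def min_def intro!: exI[of _ "Suc k'"])
  qed
qed

lemma rew_le_gfun:
  assumes "\<forall>j<K. z' j = min (z j + k) zmax \<or> (\<exists>k'\<le>k. z' j = min k' zmax)"
    and "set c \<subseteq> {..<K}" and "k + length c \<le> m"
  shows "rew f zmax z' c \<le> real (length c) * Max ((\<lambda>j. gfun f zmax j (z j) m) ` {..<K})"
  using assms
proof (induction c arbitrary: z' k)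
  case Nil
  then show ?case by simp
next
  case (Cons j cs)
  let ?G = "Max ((\<lambda>j. gfun f zmax j (z j) m) ` {..<K})"
  have jK: "j < K" using Cons.prems(2) by simp
  have "f j (z' j) \<le> gfun f zmax j (z j) m"
    unfolding gfun_def
    by (rule Max_ge) (use Cons.prems(1,3) jK in fastforce)+
  also have "\<dots> \<le> ?G"
    by (rule Max_ge) (use jK in auto)
  finally have head: "f j (z' j) \<le> ?G" .
  have "rew f zmax (step zmax z' j) cs \<le> real (length cs) * ?G"
    by (rule Cons.IH[of _ "Suc k"]) (use Cons.prems step_counter_shape in auto)
  with head show ?case
    by (simp add: algebra_simps)
qed

lemma rew_le_Psi:
  assumes "\<forall>j<K. z j \<le> zmax" and "set c \<subseteq> {..<K}"
  shows "rew f zmax z c \<le> Psi K f zmax z (length c)"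
proof (cases "c = []")
  case True
  then show ?thesis by (simp add: Psi_def)
next
  case False
  have "rew f zmax z c \<le> real (length c) * Max ((\<lambda>j. gfun f zmax j (z j) (length c)) ` {..<K})"
    by (rule rew_le_gfun[where k = 0]) (use assms in auto)
  with False show ?thesis
    by (simp add: Psi_def)
qed

lemma Min_rewards_le_rew:
  assumes "\<forall>j<K. z j \<le> zmax" and "set c \<subseteq> {..<K}"
  shows "real (length c) * Min (rewards K f zmax) \<le> rew f zmax z c"
  using assms
proof (induction c arbitrary: z)
  case Nil
  then show ?case by simp
next
  case (Cons j cs)
  have "Min (rewards K f zmax) \<le> f j (z j)"
    using Cons.prems by (intro Min_rewards_le_reward) auto
  moreover have "real (length cs) * Min (rewards K f zmax) \<le> rew f zmax (step zmax z j) cs"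
    using Cons.prems by (intro Cons.IH) (auto simp: step_def)
  ultimately show ?case
    by (simp add: algebra_simps)
qed

lemma Psi_le_Max_rewards:
  assumes "0 < K"
  shows "Psi K f zmax z m \<le> real m * Max (rewards K f zmax)"
proof (cases "m = 0")
  case True
  then show ?thesis by (simp add: Psi_def)
next
  case False
  have "gfun f zmax j (z j) m \<le> Max (rewards K f zmax)" if "j < K" for j
    unfolding gfun_def using that by (subst Max_le_iff) (auto intro!: reward_le_Max_rewards)
  then have "Max ((\<lambda>j. gfun f zmax j (z j) m) ` {..<K}) \<le> Max (rewards K f zmax)"
    using assms by (subst Max_le_iff) auto
  with False show ?thesis
    by (simp add: Psi_def mult_left_mono)
qed

context
  fixes K zmax :: nat and z0 :: "nat \<Rightarrow> nat" and f :: "nat \<Rightarrow> nat \<Rightarrow> real" and d :: nat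
  assumes K: "0 < K" and root: "\<forall>j<K. z0 j \<le> zmax"
begin

lemma vval_le_bval: "vval K f zmax z0 d i \<le> bval K f zmax z0 d i"
proof -
  let ?z = "state zmax z0 i" and ?m = "d - length i"
  have "rew f zmax ?z c \<le> Psi K f zmax ?z ?m" if "c \<in> nodes K ?m" for c
    using rew_le_Psi[OF state_le_zmax[OF root], of c] that by (auto simp: nodes_def)
  moreover have "nodes K ?m \<noteq> {}"
    using replicate_in_nodes[OF K] by blast
  ultimately have "Max ((\<lambda>c. rew f zmax ?z c) ` nodes K ?m) \<le> Psi K f zmax ?z ?m"
    using finite_nodes by (subst Max_le_iff) auto
  then show ?thesis
    by (simp add: vval_def bval_def)
qed

lemma bval_le_vval_add:
  "bval K f zmax z0 d i \<le> vval K f zmax z0 d i + real (d - length i) * Delta K f zmax"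
proof -
  let ?z = "state zmax z0 i" and ?m = "d - length i"
  have "real ?m * Min (rewards K f zmax) \<le> rew f zmax ?z (replicate ?m 0)"
    using Min_rewards_le_rew[where c = "replicate ?m 0", OF state_le_zmax[OF root]] K
    by (simp add: set_replicate_conv_if)
  also have "\<dots> \<le> Max ((\<lambda>c. rew f zmax ?z c) ` nodes K ?m)"
    by (rule Max_ge) (use finite_nodes replicate_in_nodes[OF K] in auto)
  finally have "real ?m * Min (rewards K f zmax) \<le> Max ((\<lambda>c. rew f zmax ?z c) ` nodes K ?m)" .
  moreover have "Psi K f zmax ?z ?m \<le> real ?m * Max (rewards K f zmax)"
    by (rule Psi_le_Max_rewards[OF K])
  moreover have "real ?m * Max (rewards K f zmax) - real ?m * Min (rewards K f zmax)
      \<le> real ?m * Delta K f zmax"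
    using Max_minus_Min_rewards_le_Delta[of K f zmax]
    by (simp add: right_diff_distrib[symmetric] mult_left_mono)
  ultimately show ?thesis
    by (simp add: vval_def bval_def)
qed

lemma vval_append_le:
  assumes "length (i @ c) = d" and "set c \<subseteq> {..<K}"
  shows "vval K f zmax z0 d (i @ c) \<le> vval K f zmax z0 d i"
proof -
  have c: "c \<in> nodes K (d - length i)"
    using assms by (auto simp: nodes_def)
  have "vval K f zmax z0 d (i @ c) = uval f zmax z0 i + rew f zmax (state zmax z0 i) c"
    using assms(1) by (simp add: vval_def uval_def rew_append state_def)
  also have "\<dots> \<le> vval K f zmax z0 d i"
    unfolding vval_def by (simp, rule Max_ge) (use c finite_nodes in auto)
  finally show ?thesis .
qed

lemma vstar_attained: "\<exists>l\<in>nodes K d. vstar K f zmax z0 d = vval K f zmax z0 d l"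
proof -
  have "vstar K f zmax z0 d \<in> vval K f zmax z0 d ` nodes K d"
    unfolding vstar_def by (rule Max_in) (use finite_nodes replicate_in_nodes[OF K] in auto)
  then show ?thesis by auto
qed

lemma vval_le_vstar: "l \<in> nodes K d \<Longrightarrow> vval K f zmax z0 d l \<le> vstar K f zmax z0 d"
  unfolding vstar_def by (rule Max_ge) (use finite_nodes in auto)

lemma vstar_le_bval_if_cover:
  assumes cover: "\<And>c. c \<in> nodes K d \<Longrightarrow> \<exists>x\<in>S. prefix x c"
    and max: "\<forall>x\<in>S. bval K f zmax z0 d x \<le> bval K f zmax z0 d i"
  shows "vstar K f zmax z0 d \<le> bval K f zmax z0 d i"
proof -
  obtain l where l: "l \<in> nodes K d" and vstar: "vstar K f zmax z0 d = vval K f zmax z0 d l"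
    using vstar_attained by blast
  obtain x c where x: "x \<in> S" and lc: "l = x @ c"
    using cover[OF l] by (auto simp: prefix_def)
  have "vval K f zmax z0 d l \<le> vval K f zmax z0 d x"
    unfolding lc by (rule vval_append_le) (use l lc in \<open>auto simp: nodes_def\<close>)
  also have "\<dots> \<le> bval K f zmax z0 d x" by (rule vval_le_bval)
  also have "\<dots> \<le> bval K f zmax z0 d i" using max x by blast
  finally show ?thesis using vstar by simp
qed

end

section \<open>The open nodes S_n\<close>

lemma Tset_Suc: "Tset sel (Suc n) = insert (sel n) (Tset sel n)"
  by (simp add: Tset_def lessThan_Suc)

lemma Sset_Suc_iff:
  "x \<in> Sset K sel (Suc n) \<longleftrightarrow> x \<in> Sset K sel n \<and> x \<noteq> sel n \<or> (\<exists>j<K. x = sel n @ [j])"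
  by (auto simp: children_def)

lemma Sset_subset_lists:
  assumes "\<forall>m<n. sel m \<in> Sset K sel m" and "x \<in> Sset K sel n"
  shows "set x \<subseteq> {..<K}"
  using assms
proof (induction n arbitrary: x)
  case 0
  then show ?case by simp
next
  case (Suc n)
  have IH: "set x' \<subseteq> {..<K}" if "x' \<in> Sset K sel n" for x'
    using Suc.IH Suc.prems(1) that by simp
  have "set (sel n) \<subseteq> {..<K}"
    using IH Suc.prems(1) by simp
  with Suc.prems(2) IH show ?case
    unfolding Sset_Suc_iff by auto
qed

lemma Sset_prefix_antichain:
  assumes "\<forall>m<n. sel m \<in> Sset K sel m"
    and "x \<in> Sset K sel n" and "y \<in> Sset K sel n" and "prefix x y"
  shows "x = y"
  using assms
proof (induction n arbitrary: x y)
  case 0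
  then show ?case by simp
next
  case (Suc n)
  let ?s = "sel n"
  have IH: "x' = y'" if "x' \<in> Sset K sel n" "y' \<in> Sset K sel n" "prefix x' y'" for x' y'
    using Suc.IH Suc.prems(1) that by simp
  have s: "?s \<in> Sset K sel n" using Suc.prems(1) by simp
  from Suc.prems(3)[unfolded Sset_Suc_iff] show ?case
  proof (elim disjE conjE exE)
    assume y: "y \<in> Sset K sel n" "y \<noteq> ?s"
    from Suc.prems(2)[unfolded Sset_Suc_iff] show ?thesis
    proof (elim disjE conjE exE)
      assume "x \<in> Sset K sel n" "x \<noteq> ?s"
      then show ?thesis using IH y(1) Suc.prems(4) by simp
    next
      fix j assume "x = ?s @ [j]"
      then have "prefix ?s y" using Suc.prems(4) append_prefixD by simp
      then show ?thesis using IH[OF s y(1)] y(2) by simp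
    qed
  next
    fix j assume y: "y = ?s @ [j]"
    with Suc.prems(4) have "x = y \<or> prefix x ?s" by simp
    then show ?thesis
    proof
      assume "x = y"
      then show ?thesis .
    next
      assume xs: "prefix x ?s"
      from Suc.prems(2)[unfolded Sset_Suc_iff] show ?thesis
      proof (elim disjE conjE exE)
        assume "x \<in> Sset K sel n" "x \<noteq> ?s"
        then show ?thesis using IH[OF _ s xs] by simp
      next
        fix j' assume "x = ?s @ [j']"
        then show ?thesis using prefix_length_le[OF xs] by simp
      qed
    qed
  qed
qed

lemma Sset_not_prefix_Tset:
  assumes "\<forall>m<n. sel m \<in> Sset K sel m"
    and "x \<in> Sset K sel n" and "t \<in> Tset sel n"
  shows "\<not> prefix x t"
  using assms
proof (induction n arbitrary: x t)
  case 0
  then show ?case by (simp add: Tset_def)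
next
  case (Suc n)
  let ?s = "sel n"
  have s: "?s \<in> Sset K sel n" using Suc.prems(1) by simp
  have IH: "\<not> prefix x' t'" if "x' \<in> Sset K sel n" "t' \<in> Tset sel n" for x' t'
    using Suc.IH Suc.prems(1) that by simp
  show ?case
  proof
    assume xt: "prefix x t"
    from Suc.prems(2)[unfolded Sset_Suc_iff] show False
    proof (elim disjE conjE exE)
      assume x: "x \<in> Sset K sel n" "x \<noteq> ?s"
      show False
      proof (cases "t = ?s")
        case True
        then show False
          using Sset_prefix_antichain[OF _ x(1) s] Suc.prems(1) x(2) xt by simp
      next
        case False
        then have "t \<in> Tset sel n" using Suc.prems(3) by (simp add: Tset_Suc)
        then show False using IH[OF x(1)] xt by simp
      qed
    next
      fix j assume x: "x = ?s @ [j]"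
      show False
      proof (cases "t = ?s")
        case True
        then show False using prefix_length_le[OF xt] x by simp
      next
        case False
        then have "t \<in> Tset sel n" using Suc.prems(3) by (simp add: Tset_Suc)
        moreover have "prefix ?s t" using append_prefixD xt x by simp
        ultimately show False using IH[OF s] by simp
      qed
    qed
  qed
qed

lemma Sset_covers_nodes:
  assumes "\<forall>m<n. sel m \<in> Sset K sel m \<and> length (sel m) < d" and c: "c \<in> nodes K d"
  shows "\<exists>x\<in>Sset K sel n. prefix x c"
  using assms(1)
proof (induction n)
  case 0
  then show ?case by simp
next
  case (Suc n)
  let ?s = "sel n"
  obtain x where x: "x \<in> Sset K sel n" "prefix x c"
    using Suc.IH Suc.prems by auto
  show ?case
  proof (cases "x = ?s")
    case False
    with x show ?thesis by (intro bexI[of _ x]) (simp_all add: Sset_Suc_iff)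
  next
    case True
    then obtain zs where czs: "c = ?s @ zs" using x(2) by (auto simp: prefix_def)
    have "length ?s < length c" using Suc.prems c by (simp add: nodes_def)
    with czs obtain j zs' where "zs = j # zs'" by (cases zs) auto
    with c czs have "j < K" "prefix (?s @ [j]) c" by (auto simp: nodes_def)
    then show ?thesis by (intro bexI[of _ "?s @ [j]"]) (auto simp: children_def)
  qed
qed

lemma inj_on_selected:
  assumes "\<forall>m<n. sel m \<in> Sset K sel m"
  shows "inj_on sel {..<n}"
proof (rule linorder_inj_onI')
  fix a b assume "a \<in> {..<n}" "b \<in> {..<n}" "a < b"
  then have "sel a \<in> Tset sel b" "sel b \<in> Sset K sel b" "\<forall>m<b. sel m \<in> Sset K sel m"
    using assms by (auto simp: Tset_def)
  then have "\<not> prefix (sel b) (sel a)"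
    by (intro Sset_not_prefix_Tset)
  then show "sel a \<noteq> sel b"
    by auto
qed

section \<open>Expanded nodes are near-optimal\<close>

definition optimistic_selection ::
    "nat \<Rightarrow> (nat \<Rightarrow> nat \<Rightarrow> real) \<Rightarrow> nat \<Rightarrow> (nat \<Rightarrow> nat) \<Rightarrow> nat \<Rightarrow> nat \<Rightarrow> (nat \<Rightarrow> nat list) \<Rightarrow> bool"
  where "optimistic_selection K f zmax z0 d N sel \<longleftrightarrow>
    (\<forall>n<N. (\<forall>m<n. length (sel m) < d) \<longrightarrow>
       sel n \<in> Sset K sel n \<and> (\<forall>i\<in>Sset K sel n. bval K f zmax z0 d i \<le> bval K f zmax z0 d (sel n)))"

context
  fixes K zmax :: nat and z0 :: "nat \<Rightarrow> nat" and f :: "nat \<Rightarrow> nat \<Rightarrow> real" and d N :: nat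
    and sel :: "nat \<Rightarrow> nat list"
  assumes K: "0 < K" and root: "\<forall>j<K. z0 j \<le> zmax"
    and selection: "optimistic_selection K f zmax z0 d N sel"
begin

lemma selected_in_Sset:
  assumes "n < N" and "\<forall>m<n. length (sel m) < d"
  shows "sel n \<in> Sset K sel n"
  using selection assms by (simp add: optimistic_selection_def)

lemma selected_node_gap:
  assumes n: "n < N" and shallow: "\<forall>m<n. length (sel m) < d"
  shows "sel n \<in> nodes K (length (sel n))"
    and "vstar K f zmax z0 d - vval K f zmax z0 d (sel n) \<le> real (d - length (sel n)) * Delta K f zmax"
proof -
  have earlier: "\<forall>m<n. sel m \<in> Sset K sel m \<and> length (sel m) < d"
    using selected_in_Sset n shallow by auto
  have max: "\<forall>i\<in>Sset K sel n. bval K f zmax z0 d i \<le> bval K f zmax z0 d (sel n)"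
    using selection n shallow by (simp add: optimistic_selection_def)
  have "set (sel n) \<subseteq> {..<K}"
    using earlier by (intro Sset_subset_lists[OF _ selected_in_Sset[OF n shallow]]) simp
  then show "sel n \<in> nodes K (length (sel n))"
    by (simp add: nodes_def)
  have "vstar K f zmax z0 d \<le> bval K f zmax z0 d (sel n)"
    using vstar_le_bval_if_cover[OF K root Sset_covers_nodes[OF earlier] max] by blast
  then show "vstar K f zmax z0 d - vval K f zmax z0 d (sel n) \<le> real (d - length (sel n)) * Delta K f zmax"
    using bval_le_vval_add[OF K root, of f d "sel n"] by linarith
qed

lemma selected_level_subset_near_optimal:
  assumes "\<forall>n<N. length (sel n) < d"
  shows "{t \<in> Tset sel N. length t = l}
    \<subseteq> {i \<in> nodes K l. vstar K f zmax z0 d - vval K f zmax z0 d i \<le> real (d - l) * Delta K f zmax}"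
  using selected_node_gap assms by (auto simp: Tset_def)

lemma card_Tset:
  assumes "\<forall>n<N. length (sel n) < d"
  shows "card (Tset sel N) = N"
proof -
  have "inj_on sel {..<N}"
    using assms selected_in_Sset by (intro inj_on_selected) auto
  then show ?thesis
    by (simp add: Tset_def card_image)
qed

end

section \<open>Counting expanded nodes level by level\<close>

lemma card_eq_sum_card_levels:
  assumes "finite T" and "\<forall>t\<in>T. length t \<le> D"
  shows "card T = (\<Sum>l\<le>D. card {t \<in> T. length t = l})"
proof -
  have "(\<Sum>l\<le>D. \<Sum>t\<in>{t \<in> T. length t = l}. 1::nat) = (\<Sum>t\<in>T. 1)"
    by (rule sum.group) (use assms in auto)
  then show ?thesis by simp
qed

lemma card_le_geometric_levels:
  fixes x y :: real
  assumes T: "finite T" "\<forall>t\<in>T. length t \<le> D"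
    and y: "0 \<le> y" "\<And>l. real (card {t \<in> T. length t = l}) \<le> y ^ l"
    and x: "1 < x" "\<And>l. d0 < l \<Longrightarrow> l \<le> D \<Longrightarrow> real (card {t \<in> T. length t = l}) \<le> x ^ l"
  shows "real (card T) \<le> (\<Sum>l\<le>d0. y ^ l) + (x ^ Suc D - 1) / (x - 1)"
proof -
  have "real (card T) = (\<Sum>l\<le>D. real (card {t \<in> T. length t = l}))"
    using card_eq_sum_card_levels[OF T] by simp
  also have "\<dots> \<le> (\<Sum>l\<le>D. (if l \<le> d0 then y ^ l else 0) + x ^ l)"
  proof (rule sum_mono)
    fix l assume "l \<in> {..D}"
    moreover have "0 \<le> x ^ l" using x(1) by simp
    ultimately show "real (card {t \<in> T. length t = l}) \<le> (if l \<le> d0 then y ^ l else 0) + x ^ l"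
      using y(2)[of l] x(2)[of l] by auto
  qed
  also have "\<dots> = (\<Sum>l\<in>{l \<in> {..D}. l \<le> d0}. y ^ l) + (\<Sum>l<Suc D. x ^ l)"
    by (simp only: sum.distrib sum.inter_filter[OF finite_atMost] lessThan_Suc_atMost)
  also have "(\<Sum>l\<in>{l \<in> {..D}. l \<le> d0}. y ^ l) \<le> (\<Sum>l\<le>d0. y ^ l)"
    using y(1) by (intro sum_mono2) auto
  also have "(\<Sum>l<Suc D. x ^ l) = (x ^ Suc D - 1) / (x - 1)"
    using x(1) by (intro geometric_sum) simp
  finally show ?thesis by simp
qed

lemma ln_div_ln_lt_of_le_geometric_sum:
  fixes x M :: real
  assumes x: "1 < x" and M: "0 < M" "M \<le> (x ^ Suc D - 1) / (x - 1)"
  shows "ln M / ln x + ln (x - 1) / ln x < real D + 1"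
proof -
  have "M < x ^ Suc D / (x - 1)"
    using M(2) x by (smt (verit) divide_strict_right_mono)
  then have "ln M < ln (x ^ Suc D / (x - 1))"
    using M(1) by simp
  also have "\<dots> = real (Suc D) * ln x - ln (x - 1)"
    using x by (simp add: ln_div ln_realpow del: power_Suc)
  finally have "(ln M + ln (x - 1)) / ln x < real D + 1"
    using x by (simp add: divide_simps algebra_simps)
  then show ?thesis
    by (simp add: add_divide_distrib)
qed

context
  fixes K zmax :: nat and z0 :: "nat \<Rightarrow> nat" and f :: "nat \<Rightarrow> nat \<Rightarrow> real" and d N :: nat
    and sel :: "nat \<Rightarrow> nat list"
  assumes K: "1 < K" and root: "\<forall>j<K. z0 j \<le> zmax"
    and selection: "optimistic_selection K f zmax z0 d N sel"
    and shallow: "\<forall>n<N. length (sel n) < d"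
begin

lemma card_selected_level_le_nodes: "real (card {t \<in> Tset sel N. length t = l}) \<le> real K ^ l"
proof -
  have "card {t \<in> Tset sel N. length t = l} \<le> card (nodes K l)"
    using selected_level_subset_near_optimal[OF _ root selection shallow, of l] K
    by (intro card_mono[OF finite_nodes]) auto
  then show ?thesis
    by (simp add: card_nodes flip: of_nat_power)
qed

lemma card_selected_level_le_prop_opt:
  assumes "l \<le> d"
  shows "real (card {t \<in> Tset sel N. length t = l})
    \<le> prop_opt K f zmax z0 d l (real (d - l) * Delta K f zmax) * real K ^ l"
proof -
  have "card {t \<in> Tset sel N. length t = l}
      \<le> card {i \<in> nodes K l. vstar K f zmax z0 d - vval K f zmax z0 d i \<le> real (d - l) * Delta K f zmax}"
    using selected_level_subset_near_optimal[OF _ root selection shallow, of l] K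
    by (intro card_mono) (auto simp: finite_nodes)
  then show ?thesis
    using K by (simp add: prop_opt_def)
qed

lemma selected_depth_lower_bound:
  assumes lam: "1 / real K < lam"
    and opt: "\<forall>l. d0 \<le> l \<and> l \<le> d \<longrightarrow> prop_opt K f zmax z0 d l (real (d - l) * Delta K f zmax) \<le> lam ^ l"
    and N: "(real K ^ (d0 + 1) - 1) / (real K - 1) < real N"
  shows "ln (real N - (real K ^ (d0 + 1) - 1) / (real K - 1)) / ln (lam * real K)
      + ln (lam * real K - 1) / ln (lam * real K) < real (Max (length ` Tset sel N)) + 1"
proof -
  define T where "T = Tset sel N"
  define x where "x = lam * real K"
  have x: "1 < x" using lam K by (simp add: x_def field_simps)
  have T: "finite T" "\<forall>t\<in>T. length t \<le> Max (length ` T)"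
    by (simp_all add: T_def Tset_def)
  have deep: "real (card {t \<in> T. length t = l}) \<le> x ^ l" if "d0 < l" for l
  proof (cases "l \<le> d")
    case True
    have "real (card {t \<in> T. length t = l})
        \<le> prop_opt K f zmax z0 d l (real (d - l) * Delta K f zmax) * real K ^ l"
      unfolding T_def by (rule card_selected_level_le_prop_opt[OF True])
    also have "\<dots> \<le> lam ^ l * real K ^ l"
      using opt that True by (intro mult_right_mono) auto
    finally show ?thesis by (simp add: x_def power_mult_distrib)
  next
    case False
    then have "card {t \<in> T. length t = l} = 0"
      using shallow by (auto simp: T_def Tset_def)
    then show ?thesis using x by simp
  qed
  have "real N \<le> (\<Sum>l\<le>d0. real K ^ l) + (x ^ Suc (Max (length ` T)) - 1) / (x - 1)"
    using card_le_geometric_levels[OF T _ _ x(1) deep] card_selected_level_le_nodes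
      card_Tset[OF _ root selection shallow] K
    by (simp add: T_def)
  moreover have "(\<Sum>l\<le>d0. real K ^ l) = (real K ^ (d0 + 1) - 1) / (real K - 1)"
    using K by (subst geometric_sum[symmetric]) (simp_all add: lessThan_Suc_atMost)
  ultimately show ?thesis
    using ln_div_ln_lt_of_le_geometric_sum[OF x] N by (simp add: x_def T_def)
qed

end

theorem proposition2:
  fixes K zmax d N :: nat and z0 :: "nat \<Rightarrow> nat" and f :: "nat \<Rightarrow> nat \<Rightarrow> real"
    and sel :: "nat \<Rightarrow> nat list"
  assumes K: "K \<ge> 2" and d: "d \<ge> 1"
    and root: "\<forall>j<K. z0 j \<le> zmax"
    and selection: "\<forall>n<N. (\<forall>m<n. length (sel m) < d) \<longrightarrow>
        sel n \<in> Sset K sel n \<and> (\<forall>i\<in>Sset K sel n. bval K f zmax z0 d i \<le> bval K f zmax z0 d (sel n))"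
  shows "(\<forall>n<N. (\<forall>m<n. length (sel m) < d) \<and> length (sel n) = d \<longrightarrow>
            vstar K f zmax z0 d - vval K f zmax z0 d (sel n) = 0)
       \<and> ((\<forall>n<N. length (sel n) < d) \<longrightarrow>
          (\<forall>(lam::real) (d0::nat) iN.
             1 / real K < lam \<and> lam \<le> 1 \<and> 1 \<le> d0 \<and> d0 \<le> d
             \<and> (\<forall>l. d0 \<le> l \<and> l \<le> d \<longrightarrow>
                   prop_opt K f zmax z0 d l (real (d - l) * Delta K f zmax) \<le> lam ^ l)
             \<and> real N > (real K ^ (d0 + 1) - 1) / (real K - 1)
             \<and> iN \<in> Tset sel N \<and> length iN = Max (length ` Tset sel N)
             \<and> (\<forall>i\<in>Tset sel N. length i = Max (length ` Tset sel N) \<longrightarrow>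
                   bval K f zmax z0 d i \<le> bval K f zmax z0 d iN)
             \<longrightarrow> vstar K f zmax z0 d - vval K f zmax z0 d iN
                 \<le> (real d - ln (real N - (real K ^ (d0 + 1) - 1) / (real K - 1)) / ln (lam * real K)
                     - ln (lam * real K - 1) / ln (lam * real K) + 1) * Delta K f zmax))"
proof -
  have K0: "0 < K" and K1: "1 < K" using K by simp_all
  have sel: "optimistic_selection K f zmax z0 d N sel"
    using selection by (simp add: optimistic_selection_def)
  note gap = selected_node_gap[OF K0 root sel]
  show ?thesis
  proof (intro conjI allI impI, goal_cases)
    case (1 n)
    then have "sel n \<in> nodes K d"
      using gap(1)[of n] by simp
    then show ?case
      using 1 gap(2)[of n] vval_le_vstar[OF K0 root] by (simp add: order_antisym)
  next
    case (2 lam d0 iN)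
    then have shallow: "\<forall>n<N. length (sel n) < d" by blast
    obtain m where m: "m < N" "iN = sel m"
      using 2 by (auto simp: Tset_def)
    have "ln (real N - (real K ^ (d0 + 1) - 1) / (real K - 1)) / ln (lam * real K)
        + ln (lam * real K - 1) / ln (lam * real K) < real (length iN) + 1"
      using selected_depth_lower_bound[OF K1 root sel shallow, of lam d0] 2 by simp
    with m shallow show ?case
      by (intro order_trans[OF gap(2)[OF m(1), folded m(2)] mult_right_mono])
        (simp_all add: Delta_nonneg[OF K0] of_nat_diff less_imp_le)
  qed
qed

end
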